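(* LexiPS is not lexi-efficient. Concretely, take $n=3$, $p=2$, $D_F=\{1_F,2_F,3_F\}$, $D_B=\{1_B,2_B,3_B\}$, and lexicographic preferences: agent 1: $F\rhd_1 B$, $1_F\rhd 2_F\rhd 3_F$, $1_B\rhd 2_B\rhd 3_B$; agent 2: $F\rhd_2 B$, $1_F\rhd 2_F\rhd 3_F$, $1_B\rhd 3_B\rhd 2_B$; agent 3: $B\rhd_3 F$, $1_F\rhd 2_F\rhd 3_F$, $2_B\rhd 3_B\rhd 1_B$. Then LexiPS gives agent 1 the allocation with share $0.25$ of each of $1_F1_B,1_F3_B,2_F1_B,2_F3_B$, and this allocation is lexicographically dominated w.r.t. $\succ_1$ by the allocation with share $0.5$ of $1_F1_B$ and $0.5$ of $2_F3_B$.
   Context: Setting: $N$ agents, types $D_i$ with $|D_i|=n$ pairwise disjoint, unit supply, bundles $\mathcal D=\prod_i D_i$, $x_i$ the type-$i$ component. Lexicographic preference: importance order $\rhd_j$ over types and orders $\rhd^i_j$ on each $D_i$; $x\succ_j y$ iff some type $i$ has $x_i\rhd^i_j y_i$ and $x_{i'}=y_{i'}$ for all $i'\rhd_j i$. Lexicographic dominance: allocation $p$ lexicographically dominates $q$ w.r.t. $\succ$ if there is a bundle $x$ with $p_x>q_x$ and $p_y\ge q_y$ for every $y\succ x$. An assignment $P$ is lexi-efficient if there is no assignment $Q$ such that $Q_j$ lexicographically dominates $P_j$ w.r.t. $\succ_j$ for every agent $j$. LexiPS: supplies start at $1$ and carry across phases; in phase $k=1,\dots,p$ (unit duration), each agent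 $j$ eats at rate $1$ her $\rhd^i_j$-favorite item with positive remaining supply among items of her $k$-th most important type $i$; with $s^i_{j,o}$ the amount eaten of $o\in D_i$, output $p_{j,x}=\prod_i s^i_{j,x_i}$. *)

theory Defs
  imports Complex_Main
begin

(* 
  Types are numbered 0,...,p-1; the items of type i are the pairs (i,a) with a < n,
  so the sets D_i are pairwise disjoint.  A bundle is a list x of length p, x!i being the
  index of its type-i item.  Agents are numbered 0,...,N-1.
  A lexicographic preference of agent j is given by
    imp j   : the list of all types, most important first (importance order),
    ord j i : the list of all item indices of type i, most preferred first.
*)

type_synonym item = "nat \<times> nat"
type_synonym bdl = "nat list"

definition bundles :: "nat \<Rightarrow> nat \<Rightarrow> bdl set" where
  "bundles n p = {x. length x = p \<and> (\<forall>i<p. x ! i < n)}"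

definition before :: "'a list \<Rightarrow> 'a \<Rightarrow> 'a \<Rightarrow> bool" where
  "before xs a b \<longleftrightarrow> (\<exists>k l. k < l \<and> l < length xs \<and> xs ! k = a \<and> xs ! l = b)"

definition lex_pref :: "nat \<Rightarrow> nat list \<Rightarrow> (nat \<Rightarrow> nat list) \<Rightarrow> bdl \<Rightarrow> bdl \<Rightarrow> bool" where
  "lex_pref p imp ord x y \<longleftrightarrow>
     (\<exists>i<p. before (ord i) (x ! i) (y ! i) \<and> (\<forall>i'<p. before imp i' i \<longrightarrow> x ! i' = y ! i'))"

definition lex_dominates ::
  "nat \<Rightarrow> nat \<Rightarrow> (bdl \<Rightarrow> bdl \<Rightarrow> bool) \<Rightarrow> (bdl \<Rightarrow> real) \<Rightarrow> (bdl \<Rightarrow> real) \<Rightarrow> bool" where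
  "lex_dominates n p succ P Q \<longleftrightarrow>
     (\<exists>x\<in>bundles n p. P x > Q x \<and> (\<forall>y\<in>bundles n p. succ y x \<longrightarrow> P y \<ge> Q y))"

definition is_assignment :: "nat \<Rightarrow> nat \<Rightarrow> nat \<Rightarrow> (nat \<Rightarrow> bdl \<Rightarrow> real) \<Rightarrow> bool" where
  "is_assignment N n p Q \<longleftrightarrow>
     (\<forall>j<N. (\<forall>x. Q j x \<ge> 0) \<and> (\<forall>x. x \<notin> bundles n p \<longrightarrow> Q j x = 0)
            \<and> (\<Sum>x\<in>bundles n p. Q j x) = 1)
   \<and> (\<forall>i<p. \<forall>a<n. (\<Sum>j<N. \<Sum>x\<in>{x\<in>bundles n p. x ! i = a}. Q j x) \<le> 1)"

definition lexi_efficient ::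
  "nat \<Rightarrow> nat \<Rightarrow> nat \<Rightarrow> (nat \<Rightarrow> nat list) \<Rightarrow> (nat \<Rightarrow> nat \<Rightarrow> nat list)
   \<Rightarrow> (nat \<Rightarrow> bdl \<Rightarrow> real) \<Rightarrow> bool" where
  "lexi_efficient N n p imp ord P \<longleftrightarrow>
     \<not> (\<exists>Q. is_assignment N n p Q \<and>
            (\<forall>j<N. lex_dominates n p (lex_pref p (imp j) (ord j)) (Q j) (P j)))"

(* LexiPS as an event-driven simulation of the eating process.
  In a phase, every agent eats (rate 1) her favourite item with positive remaining
  supply among the items of the type she currently eats; between two events the set of eaten
  items is constant, and the next event is the earliest exhaustion of an eaten item (or the end
  of the phase).  State: (remaining supplies, amounts eaten, remaining time of the phase).*)

definition eat_target :: "(item \<Rightarrow> real) \<Rightarrow> nat list \<Rightarrow> nat \<Rightarrow> item option" where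
  "eat_target s ordi i = map_option (\<lambda>a. (i, a)) (find (\<lambda>a. s (i, a) > 0) ordi)"

definition ps_step ::
  "nat \<Rightarrow> nat \<Rightarrow> (nat \<Rightarrow> nat list) \<Rightarrow> (nat \<Rightarrow> nat \<Rightarrow> nat list)
   \<Rightarrow> (item \<Rightarrow> real) \<times> (nat \<Rightarrow> item \<Rightarrow> real) \<times> real
   \<Rightarrow> (item \<Rightarrow> real) \<times> (nat \<Rightarrow> item \<Rightarrow> real) \<times> real" where
  "ps_step N k imp ord st = (case st of (s, e, \<tau>) \<Rightarrow>
     let tgt = (\<lambda>j. eat_target s (ord j (imp j ! k)) (imp j ! k));
         rate = (\<lambda>it. real (card {j. j < N \<and> tgt j = Some it}));
         eaten = {it. \<exists>j<N. tgt j = Some it};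
         \<delta> = Min (insert \<tau> ((\<lambda>it. s it / rate it) ` eaten))
     in (\<lambda>it. s it - rate it * \<delta>,
         \<lambda>j it. if j < N \<and> tgt j = Some it then e j it + \<delta> else e j it,
         \<tau> - \<delta>))"

(* Phase k (0-based) lasts one time unit; each non-final event exhausts an item, so n*p+1
  event steps suffice to finish the phase (further steps with no time left are idle).*)
fun lexips_run ::
  "nat \<Rightarrow> nat \<Rightarrow> nat \<Rightarrow> (nat \<Rightarrow> nat list) \<Rightarrow> (nat \<Rightarrow> nat \<Rightarrow> nat list) \<Rightarrow> nat
   \<Rightarrow> (item \<Rightarrow> real) \<times> (nat \<Rightarrow> item \<Rightarrow> real)" where
  "lexips_run N n p imp ord 0 = (\<lambda>_. 1, \<lambda>_ _. 0)"
| "lexips_run N n p imp ord (Suc k) =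
     (case lexips_run N n p imp ord k of (s, e) \<Rightarrow>
        (case (ps_step N k imp ord ^^ (n * p + 1)) (s, e, 1) of (s', e', _) \<Rightarrow> (s', e')))"

definition lexips ::
  "nat \<Rightarrow> nat \<Rightarrow> nat \<Rightarrow> (nat \<Rightarrow> nat list) \<Rightarrow> (nat \<Rightarrow> nat \<Rightarrow> nat list) \<Rightarrow> nat \<Rightarrow> bdl \<Rightarrow> real" where
  "lexips N n p imp ord j x =
     (if x \<in> bundles n p then (\<Prod>i<p. snd (lexips_run N n p imp ord p) j (i, x ! i)) else 0)"

(* The example: type F = 0, type B = 1; item a_F = (0, a-1), a_B = (1, a-1);
  agent 1,2,3 = 0,1,2.*)
definition ex_imp :: "nat \<Rightarrow> nat list" where
  "ex_imp j = (if j = 2 then [1, 0] else [0, 1])"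

definition ex_ord :: "nat \<Rightarrow> nat \<Rightarrow> nat list" where
  "ex_ord j i = (if i = 0 then [0, 1, 2]
                 else if j = 0 then [0, 1, 2]
                 else if j = 1 then [0, 2, 1]
                 else [1, 2, 0])"

end

theory Submission
  imports Defs
begin

text \<open>In phase F, agents 1 and 2 split 1_F and then 2_F equally while agent 3 eats 2_B; in phase B
  they split 1_B and then 3_B (2_B is gone) while agent 3 eats 3_F. LexiPS multiplies the marginals,
  so agent 1 receives the four bundles 1_F1_B, 1_F3_B, 2_F1_B, 2_F3_B with weight 1/4 each. Correlating
  the halves instead (1_F1_B and 2_F3_B for agent 1, 1_F1_B and 3_F3_B for agent 2, 2_F2_B and 3_F2_B
  for agent 3) is still feasible and gives every agent more of a bundle than LexiPS does, with nothing
  better for her losing weight.\<close>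

lemma before_Nil [simp]: "\<not> before [] a b"
  by (simp add: before_def)

lemma before_Cons [simp]:
  "before (x # xs) a b \<longleftrightarrow> (a = x \<and> b \<in> set xs) \<or> before xs a b"
proof
  assume "before (x # xs) a b"
  then obtain k l where kl: "k < l" "l < Suc (length xs)" "(x # xs) ! k = a" "(x # xs) ! l = b"
    by (auto simp: before_def)
  show "(a = x \<and> b \<in> set xs) \<or> before xs a b"
  proof (cases k)
    case 0
    with kl show ?thesis by (cases l) auto
  next
    case (Suc k')
    with kl show ?thesis
      by (cases l) (auto simp: before_def)
  qed
next
  assume "(a = x \<and> b \<in> set xs) \<or> before xs a b"
  then show "before (x # xs) a b"
  proof
    assume "a = x \<and> b \<in> set xs"
    then obtain l where "l < length xs" "xs ! l = b" by (auto simp: in_set_conv_nth)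
    with \<open>a = x \<and> b \<in> set xs\<close> show ?thesis
      unfolding before_def by (intro exI[of _ 0] exI[of _ "Suc l"]) auto
  next
    assume "before xs a b"
    then obtain k l where "k < l" "l < length xs" "xs ! k = a" "xs ! l = b"
      by (auto simp: before_def)
    then show ?thesis
      unfolding before_def by (intro exI[of _ "Suc k"] exI[of _ "Suc l"]) auto
  qed
qed

lemma bundles_0 [simp]: "bundles n 0 = {[]}"
  by (auto simp: bundles_def)

lemma bundles_Suc: "bundles n (Suc p) = (\<Union>a<n. (#) a ` bundles n p)"
proof (intro set_eqI iffI)
  fix x
  assume "x \<in> bundles n (Suc p)"
  then obtain a y where "x = a # y" "a < n" "y \<in> bundles n p"
    by (cases x) (auto simp: bundles_def All_less_Suc2)
  then show "x \<in> (\<Union>a<n. (#) a ` bundles n p)" by blast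
next
  fix x
  assume "x \<in> (\<Union>a<n. (#) a ` bundles n p)"
  then show "x \<in> bundles n (Suc p)"
    by (auto simp: bundles_def less_Suc_eq_0_disj)
qed

lemma finite_bundles: "finite (bundles n p)"
  by (induction p) (simp_all add: bundles_Suc)

lemma bundles_3_2: "bundles 3 2 = {[0, 0], [0, 1], [0, 2], [1, 0], [1, 1], [1, 2], [2, 0], [2, 1], [2, 2]}"
  by (simp add: numeral_2_eq_2 numeral_3_eq_3 bundles_Suc lessThan_Suc insert_commute)

lemma ps_step_eqI:
  assumes "\<And>j. j < N \<Longrightarrow> eat_target s (ord j (imp j ! k)) (imp j ! k) = T j"
    and "\<And>it. real (card {j. j < N \<and> T j = Some it}) = R it"
    and "{it. \<exists>j<N. T j = Some it} = E"
    and "Min (insert \<tau> ((\<lambda>it. s it / R it) ` E)) = d"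
  shows "ps_step N k imp ord (s, e, \<tau>) =
     (\<lambda>it. s it - R it * d, \<lambda>j it. if j < N \<and> T j = Some it then e j it + d else e j it, \<tau> - d)"
proof -
  have "(j < N \<and> eat_target s (ord j (imp j ! k)) (imp j ! k) = Some it) \<longleftrightarrow> (j < N \<and> T j = Some it)"
    for j it
    using assms(1) by auto
  then show ?thesis
    unfolding ps_step_def Let_def by (simp only: prod.case assms(2-4))
qed

lemma ps_step_no_time:
  assumes "\<forall>it. s it \<ge> 0"
  shows "ps_step N k imp ord (s, e, 0) = (s, e, 0)"
proof -
  define T where "T = (\<lambda>j. eat_target s (ord j (imp j ! k)) (imp j ! k))"
  define R where "R = (\<lambda>it. real (card {j. j < N \<and> T j = Some it}))"
  define E where "E = {it. \<exists>j<N. T j = Some it}"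
  have "E \<subseteq> the ` T ` {..<N}"
    unfolding E_def by force
  then have "finite E"
    by (rule finite_subset) simp
  with assms have "Min (insert 0 ((\<lambda>it. s it / R it) ` E)) = 0"
    by (intro Min_eqI) (auto simp: R_def)
  then have "ps_step N k imp ord (s, e, 0) =
      (\<lambda>it. s it - R it * 0, \<lambda>j it. if j < N \<and> T j = Some it then e j it + 0 else e j it, 0 - 0)"
    by (intro ps_step_eqI) (auto simp: T_def R_def E_def)
  then show ?thesis
    by (simp add: fun_eq_iff)
qed

lemma funpow_fixed_point: "f x = x \<Longrightarrow> (f ^^ m) x = x"
  by (induction m) simp_all

lemma lexips_run_SucI:
  assumes "lexips_run N n p imp ord k = (s, e)"
    and "ps_step N k imp ord (s, e, 1) = st"
    and "ps_step N k imp ord st = (s', e', 0)"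
    and "\<forall>it. s' it \<ge> 0"
    and "2 \<le> n * p"
  shows "lexips_run N n p imp ord (Suc k) = (s', e')"
proof -
  let ?f = "ps_step N k imp ord"
  from assms(5) obtain m where m: "n * p + 1 = m + 2"
    by (metis add.commute add_Suc_right le_Suc_ex numeral_2_eq_2 plus_1_eq_Suc)
  have "(?f ^^ m) (s', e', 0) = (s', e', 0)"
    using assms(4) by (intro funpow_fixed_point ps_step_no_time)
  moreover have "(?f ^^ 2) (s, e, 1) = (s', e', 0)"
    using assms(2,3) by (simp add: numeral_2_eq_2)
  ultimately have "(?f ^^ (n * p + 1)) (s, e, 1) = (s', e', 0)"
    by (simp only: m funpow_add comp_apply)
  then show ?thesis
    using assms(1) by (simp only: lexips_run.simps prod.case)
qed

lemma ps_step_pair_and_single: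
  assumes "\<And>j. j < 3 \<Longrightarrow> eat_target s (ord j (imp j ! k)) (imp j ! k) = Some (if j = 2 then b else a)"
    and "a \<noteq> b"
    and "Min {\<tau>, s a / 2, s b} = d"
  shows "ps_step 3 k imp ord (s, e, \<tau>) =
    (\<lambda>it. if it = a then s a - 2 * d else if it = b then s b - d else s it,
     \<lambda>j it. if j < 3 \<and> it = (if j = 2 then b else a) then e j it + d else e j it,
     \<tau> - d)"
proof -
  define R where "R = (\<lambda>it. if it = a then 2 else if it = b then 1 else (0::real))"
  have less_3: "j < 3 \<longleftrightarrow> j = 0 \<or> j = 1 \<or> j = (2::nat)" for j
    by auto
  have "{j. j < 3 \<and> Some (if j = (2::nat) then b else a) = Some it} =
      (if it = a then {0, 1} else if it = b then {2} else {})" for it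
    using \<open>a \<noteq> b\<close> unfolding less_3 by auto
  then have "real (card {j. j < 3 \<and> Some (if j = (2::nat) then b else a) = Some it}) = R it" for it
    by (simp add: R_def)
  moreover have "{it. \<exists>j<3. Some (if j = (2::nat) then b else a) = Some it} = {a, b}"
    unfolding less_3 by (auto intro: exI[of _ 0] exI[of _ 2])
  moreover have "Min (insert \<tau> ((\<lambda>it. s it / R it) ` {a, b})) = d"
    using assms(2,3) by (simp add: R_def)
  ultimately have "ps_step 3 k imp ord (s, e, \<tau>) =
    (\<lambda>it. s it - R it * d,
     \<lambda>j it. if j < 3 \<and> Some (if j = 2 then b else a) = Some it then e j it + d else e j it,
     \<tau> - d)"
    by (intro ps_step_eqI assms(1))
  then show ?thesis
    by (auto simp: R_def fun_eq_iff)
qed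

definition ex_supply_1 :: "item \<Rightarrow> real" where
  "ex_supply_1 it = (if it \<in> {(0, 0), (0, 1), (1, 1)} then 0 else 1)"

definition ex_eaten_1 :: "nat \<Rightarrow> item \<Rightarrow> real" where
  "ex_eaten_1 j it =
     (if j < 2 \<and> it \<in> {(0, 0), (0, 1)} then 1 / 2 else if j = 2 \<and> it = (1, 1) then 1 else 0)"

definition ex_supply_2 :: "item \<Rightarrow> real" where
  "ex_supply_2 it = (if it \<in> {(0, 0), (0, 1), (0, 2), (1, 0), (1, 1), (1, 2)} then 0 else 1)"

definition ex_eaten_2 :: "nat \<Rightarrow> item \<Rightarrow> real" where
  "ex_eaten_2 j it =
     (if j < 2 \<and> it \<in> {(0, 0), (0, 1), (1, 0), (1, 2)} then 1 / 2
      else if j = 2 \<and> it \<in> {(1, 1), (0, 2)} then 1 else 0)"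

text \<open>In each phase, agents 1 and 2 share one item at rate 2 and exhaust it at time 1/2, then
  share a second one; agent 3 eats alone. So every phase consists of exactly two events.\<close>

lemma lexips_run_example_1: "lexips_run 3 3 2 ex_imp ex_ord 1 = (ex_supply_1, ex_eaten_1)"
proof -
  define s :: "item \<Rightarrow> real" where
    "s it = (if it = (0, 0) then 0 else if it = (1, 1) then 1 / 2 else 1)" for it
  define e :: "nat \<Rightarrow> item \<Rightarrow> real" where
    "e j it = (if j < 3 \<and> it = (if j = 2 then (1, 1) else (0, 0)) then 1 / 2 else 0)" for j it
  have first_event: "ps_step 3 0 ex_imp ex_ord (\<lambda>_. 1, \<lambda>_ _. 0, 1) = (s, e, 1 / 2)"
    by (subst ps_step_pair_and_single[where a = "(0, 0)" and b = "(1, 1)" and d = "1 / 2"])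
      (auto simp: less_Suc_eq numeral_3_eq_3 eat_target_def ex_imp_def ex_ord_def s_def e_def
        fun_eq_iff)
  have second_event: "ps_step 3 0 ex_imp ex_ord (s, e, 1 / 2) = (ex_supply_1, ex_eaten_1, 0)"
    by (subst ps_step_pair_and_single[where a = "(0, 1)" and b = "(1, 1)" and d = "1 / 2"])
      (auto simp: less_Suc_eq numeral_3_eq_3 eat_target_def ex_imp_def ex_ord_def s_def e_def
        ex_supply_1_def ex_eaten_1_def fun_eq_iff)
  show ?thesis
    unfolding One_nat_def
    by (rule lexips_run_SucI[OF _ first_event second_event]) (auto simp: ex_supply_1_def)
qed

lemma lexips_run_example_2: "lexips_run 3 3 2 ex_imp ex_ord 2 = (ex_supply_2, ex_eaten_2)"
proof -
  define s :: "item \<Rightarrow> real" where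
    "s it = (if it \<in> {(0, 0), (0, 1), (1, 0), (1, 1)} then 0 else if it = (0, 2) then 1 / 2 else 1)" for it
  define e :: "nat \<Rightarrow> item \<Rightarrow> real" where
    "e j it = (if j < 2 \<and> it \<in> {(0, 0), (0, 1), (1, 0)} then 1 / 2
       else if j = 2 \<and> it = (1, 1) then 1 else if j = 2 \<and> it = (0, 2) then 1 / 2 else 0)" for j it
  have first_event: "ps_step 3 1 ex_imp ex_ord (ex_supply_1, ex_eaten_1, 1) = (s, e, 1 / 2)"
    by (subst ps_step_pair_and_single[where a = "(1, 0)" and b = "(0, 2)" and d = "1 / 2"])
      (auto simp: less_Suc_eq numeral_3_eq_3 eat_target_def ex_imp_def ex_ord_def s_def e_def
        ex_supply_1_def ex_eaten_1_def fun_eq_iff)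
  have second_event: "ps_step 3 1 ex_imp ex_ord (s, e, 1 / 2) = (ex_supply_2, ex_eaten_2, 0)"
    by (subst ps_step_pair_and_single[where a = "(1, 2)" and b = "(0, 2)" and d = "1 / 2"])
      (auto simp: less_Suc_eq numeral_3_eq_3 eat_target_def ex_imp_def ex_ord_def s_def e_def
        ex_supply_2_def ex_eaten_2_def fun_eq_iff)
  have "lexips_run 3 3 2 ex_imp ex_ord (Suc 1) = (ex_supply_2, ex_eaten_2)"
    by (rule lexips_run_SucI[OF lexips_run_example_1 first_event second_event])
      (auto simp: ex_supply_2_def)
  then show ?thesis
    by (simp only: Suc_1)
qed

lemma lexips_example:
  "lexips 3 3 2 ex_imp ex_ord j x =
     (if x \<in> bundles 3 2 then ex_eaten_2 j (0, x ! 0) * ex_eaten_2 j (1, x ! 1) else 0)"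
  unfolding lexips_def lexips_run_example_2 by (simp add: numeral_2_eq_2)

definition ex_dominating_assignment :: "nat \<Rightarrow> bdl \<Rightarrow> real" where
  "ex_dominating_assignment j x =
     (if j = 0 then (if x = [0, 0] \<or> x = [1, 2] then 1 / 2 else 0)
      else if j = 1 then (if x = [0, 0] \<or> x = [2, 2] then 1 / 2 else 0)
      else (if x = [1, 1] \<or> x = [2, 1] then 1 / 2 else 0))"

lemma is_assignment_ex_dominating_assignment: "is_assignment 3 3 2 ex_dominating_assignment"
  unfolding is_assignment_def sum.inter_filter[OF finite_bundles]
  unfolding bundles_3_2
  by (simp add: ex_dominating_assignment_def numeral_2_eq_2 numeral_3_eq_3 All_less_Suc2)

lemma ex_dominating_assignment_lex_dominates:
  assumes "j < 3"
  shows "lex_dominates 3 2 (lex_pref 2 (ex_imp j) (ex_ord j))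
    (ex_dominating_assignment j) (lexips 3 3 2 ex_imp ex_ord j)"
proof -
  note defs = ex_eaten_2_def ex_dominating_assignment_def lex_pref_def ex_imp_def ex_ord_def
    numeral_2_eq_2 Ex_less_Suc2 All_less_Suc2
  from assms consider "j = 0" | "j = 1" | "j = 2"
    by linarith
  then show ?thesis
  proof cases
    case 1
    show ?thesis
      unfolding \<open>j = 0\<close> lex_dominates_def lexips_example bundles_3_2
      by (intro bexI[of _ "[0, 0]"]) (simp_all add: defs)
  next
    case 2
    show ?thesis
      unfolding \<open>j = 1\<close> lex_dominates_def lexips_example bundles_3_2
      by (intro bexI[of _ "[0, 0]"]) (simp_all add: defs)
  next
    case 3
    show ?thesis
      unfolding \<open>j = 2\<close> lex_dominates_def lexips_example bundles_3_2
      by (intro bexI[of _ "[1, 1]"]) (simp_all add: defs)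
  qed
qed

theorem mainTheorem6:
  shows "lexips 3 3 2 ex_imp ex_ord 0 =
           (\<lambda>x. if x \<in> {[0, 0], [0, 2], [1, 0], [1, 2]} then 1 / 4 else 0)
       \<and> lex_dominates 3 2 (lex_pref 2 (ex_imp 0) (ex_ord 0))
           (\<lambda>x. if x = [0, 0] \<or> x = [1, 2] then 1 / 2 else 0)
           (lexips 3 3 2 ex_imp ex_ord 0)
       \<and> \<not> lexi_efficient 3 3 2 ex_imp ex_ord (lexips 3 3 2 ex_imp ex_ord)"
proof (intro conjI)
  show "lexips 3 3 2 ex_imp ex_ord 0 = (\<lambda>x. if x \<in> {[0, 0], [0, 2], [1, 0], [1, 2]} then 1 / 4 else 0)"
    by (auto simp: fun_eq_iff lexips_example bundles_3_2 ex_eaten_2_def)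
  show "lex_dominates 3 2 (lex_pref 2 (ex_imp 0) (ex_ord 0))
      (\<lambda>x. if x = [0, 0] \<or> x = [1, 2] then 1 / 2 else 0) (lexips 3 3 2 ex_imp ex_ord 0)"
  proof -
    have "ex_dominating_assignment 0 = (\<lambda>x. if x = [0, 0] \<or> x = [1, 2] then 1 / 2 else 0)"
      by (simp add: fun_eq_iff ex_dominating_assignment_def)
    then show ?thesis
      using ex_dominating_assignment_lex_dominates[of 0] by simp
  qed
  show "\<not> lexi_efficient 3 3 2 ex_imp ex_ord (lexips 3 3 2 ex_imp ex_ord)"
    unfolding lexi_efficient_def
    using is_assignment_ex_dominating_assignment ex_dominating_assignment_lex_dominates by blast
qed

end
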